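(* Let $1\le i,j\le N-1$ with $i\neq j$ and $i\ne j+1$. Then $T_j^{-1}\phi_iT_j=\phi_i$ in $\mathcal H_N(s)$.
   Context: $N\ge2$, $s$ an indeterminate. $\mathcal H_N(s)$ is the algebra over $\mathbb C(s)$ (or $\mathbb C(q,s)$) generated by $T_1,\dots,T_{N-1}$ with relations $(T_i+1)(T_i-s)=0$, $T_iT_{i+1}T_i=T_{i+1}T_iT_{i+1}$, $T_iT_j=T_jT_i$ for $|i-j|>1$; $T_i^{-1}=s^{-1}(T_i+1-s)$. For $1\le i<N$, $\phi_i:=s^{i-N}T_iT_{i+1}\cdots T_{N-1}T_{N-1}\cdots T_i$. *)

theory Defs
  imports Complex_Main "HOL-Computational_Algebra.Polynomial" "HOL-Computational_Algebra.Fraction_Field"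
begin

definition s_ind :: "complex poly fract" where
  "s_ind = Fract [:0, 1:] 1"

text \<open>A C(s)-algebra: a ring 'h with a unital ring homomorphism emb from C(s) into
  the centre of 'h.  is_hecke N emb T says that the elements T 1, ..., T (N-1) satisfy the
  defining relations of the Iwahori-Hecke algebra H_N(s).  Statements about H_N(s) are
  stated for every such algebra (H_N(s) itself being the universal one).\<close>
definition is_hecke :: "nat \<Rightarrow> (complex poly fract \<Rightarrow> 'h::ring_1) \<Rightarrow> (nat \<Rightarrow> 'h) \<Rightarrow> bool" where
  "is_hecke N emb T \<longleftrightarrow>
     emb 0 = 0 \<and> emb 1 = 1 \<and>
     (\<forall>a b. emb (a + b) = emb a + emb b) \<and>
     (\<forall>a b. emb (a * b) = emb a * emb b) \<and>
     (\<forall>a x. emb a * x = x * emb a) \<and>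
     (\<forall>i. 1 \<le> i \<and> i < N \<longrightarrow> (T i + 1) * (T i - emb s_ind) = 0) \<and>
     (\<forall>i. 1 \<le> i \<and> i + 1 < N \<longrightarrow> T i * T (i + 1) * T i = T (i + 1) * T i * T (i + 1)) \<and>
     (\<forall>i j. 1 \<le> i \<and> i < N \<and> 1 \<le> j \<and> j < N \<and> (i + 1 < j \<or> j + 1 < i) \<longrightarrow>
            T i * T j = T j * T i)"

definition Tinv :: "(complex poly fract \<Rightarrow> 'h::ring_1) \<Rightarrow> (nat \<Rightarrow> 'h) \<Rightarrow> nat \<Rightarrow> 'h" where
  "Tinv emb T i = emb (inverse s_ind) * (T i + 1 - emb s_ind)"

definition phi :: "nat \<Rightarrow> (complex poly fract \<Rightarrow> 'h::ring_1) \<Rightarrow> (nat \<Rightarrow> 'h) \<Rightarrow> nat \<Rightarrow> 'h" where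
  "phi N emb T i = emb (s_ind powi (int i - int N)) *
      prod_list (map T [i..<N]) * prod_list (map T (rev [i..<N]))"

end

theory Submission
  imports Defs
begin

text \<open>Write \<open>\<phi>\<^sub>i\<close> as a central scalar times \<open>A B\<close> with \<open>A = T\<^sub>i \<cdots> T\<^sub>N\<^sub>-\<^sub>1\<close> and
  \<open>B = T\<^sub>N\<^sub>-\<^sub>1 \<cdots> T\<^sub>i\<close>; it suffices that \<open>T\<^sub>j\<close> commutes with \<open>A B\<close>. If \<open>j + 1 < i\<close> this is
  the far commutation relation. If \<open>i < j\<close>, the braid relation
  \<open>T\<^sub>j\<^sub>-\<^sub>1 T\<^sub>j T\<^sub>j\<^sub>-\<^sub>1 = T\<^sub>j T\<^sub>j\<^sub>-\<^sub>1 T\<^sub>j\<close> moves \<open>T\<^sub>j\<close> through \<open>A\<close>, where it becomes \<open>T\<^sub>j\<^sub>-\<^sub>1\<close>, which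
  the mirrored word \<open>B\<close> turns back into \<open>T\<^sub>j\<close>.\<close>

lemma mult_prod_list_commute:
  fixes x :: "'a::monoid_mult"
  assumes "\<And>y. y \<in> set ys \<Longrightarrow> x * y = y * x"
  shows "x * prod_list ys = prod_list ys * x"
  using assms
proof (induction ys)
  case Nil
  then show ?case by simp
next
  case (Cons y ys)
  then have xy: "x * y = y * x" and IH: "x * prod_list ys = prod_list ys * x" by auto
  have "x * prod_list (y # ys) = y * (x * prod_list ys)" by (simp add: xy flip: mult.assoc)
  also have "\<dots> = prod_list (y # ys) * x" by (simp add: IH mult.assoc)
  finally show ?case .
qed

lemma mult_commute_through_product:
  fixes x y A B :: "'a::monoid_mult"
  assumes "x * A = A * y" and "y * B = B * x"
  shows "x * (A * B) = (A * B) * x"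
proof -
  have "x * (A * B) = A * (y * B)" by (simp add: assms(1) flip: mult.assoc)
  also have "\<dots> = (A * B) * x" by (simp add: assms(2) mult.assoc)
  finally show ?thesis .
qed

lemma braid_conjugates_word:
  fixes a b P Q :: "'a::monoid_mult"
  assumes braid: "a * b * a = b * a * b" and "b * P = P * b" and "a * Q = Q * a"
  shows "b * (P * a * b * Q) = (P * a * b * Q) * a"
    and "a * (Q * b * a * P) = (Q * b * a * P) * b"
proof -
  have "b * (P * a * b * Q) = P * (b * a * b) * Q" by (simp add: assms(2) flip: mult.assoc)
  also have "\<dots> = P * (a * b * a) * Q" by (simp only: braid)
  finally show "b * (P * a * b * Q) = (P * a * b * Q) * a" by (simp add: assms(3) mult.assoc)
next
  have "a * (Q * b * a * P) = Q * (a * b * a) * P" by (simp add: assms(3) flip: mult.assoc)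
  also have "\<dots> = Q * (b * a * b) * P" by (simp only: braid)
  finally show "a * (Q * b * a * P) = (Q * b * a * P) * b" by (simp add: assms(2) mult.assoc)
qed

lemma s_ind_nonzero: "s_ind \<noteq> 0"
  unfolding s_ind_def by (simp add: Zero_fract_def eq_fract)

lemma hecke_emb_central: "is_hecke N emb T \<Longrightarrow> emb a * x = x * emb a"
  unfolding is_hecke_def by blast

lemma hecke_far_commute:
  "\<lbrakk>is_hecke N emb T; 1 \<le> i; i < N; 1 \<le> j; j < N; i + 1 < j \<or> j + 1 < i\<rbrakk>
    \<Longrightarrow> T i * T j = T j * T i"
  unfolding is_hecke_def by blast

lemma hecke_braid:
  "\<lbrakk>is_hecke N emb T; 1 \<le> i; i + 1 < N\<rbrakk> \<Longrightarrow> T i * T (i + 1) * T i = T (i + 1) * T i * T (i + 1)"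
  unfolding is_hecke_def by blast

lemma Tinv_mult_T:
  assumes H: "is_hecke N emb T" and "1 \<le> j" "j < N"
  shows "Tinv emb T j * T j = 1"
proof -
  let ?s = "emb s_ind"
  have quadratic: "(T j + 1) * (T j - ?s) = 0" using H assms unfolding is_hecke_def by blast
  have "(T j + 1 - ?s) * T j = (T j + 1) * (T j - ?s) + ?s"
    using hecke_emb_central[OF H, of s_ind "T j"] by (simp add: algebra_simps)
  then have "(T j + 1 - ?s) * T j = ?s" using quadratic by simp
  moreover have "emb (inverse s_ind) * ?s = 1"
    using H s_ind_nonzero unfolding is_hecke_def by (metis left_inverse)
  ultimately show ?thesis unfolding Tinv_def by (simp add: mult.assoc)
qed

lemma hecke_T_commute_prod_far:
  assumes H: "is_hecke N emb T" and "1 \<le> j" "j < N"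
    and "\<And>k. k \<in> set ks \<Longrightarrow> 1 \<le> k \<and> k < N \<and> (k + 1 < j \<or> j + 1 < k)"
  shows "T j * prod_list (map T ks) = prod_list (map T ks) * T j"
  by (rule mult_prod_list_commute) (use assms hecke_far_commute[OF H] in fastforce)

lemma upt_split_around:
  assumes "i < j" "j < (N::nat)"
  shows "[i..<N] = [i..<j-1] @ [j-1, j] @ [j+1..<N]"
proof -
  have "[i..<N] = [i..<j-1] @ [j-1..<N]"
    using assms upt_add_eq_append[of i "j-1" "N-(j-1)"] by simp
  also have "[j-1..<N] = [j-1, j] @ [j+1..<N]"
    using assms by (simp add: upt_conv_Cons)
  finally show ?thesis .
qed

lemma hecke_T_commute_palindrome:
  assumes H: "is_hecke N emb T" and "1 \<le> i" "1 \<le> j" "j < N" "i \<noteq> j" "i \<noteq> j + 1"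
  defines "A \<equiv> prod_list (map T [i..<N])" and "B \<equiv> prod_list (map T (rev [i..<N]))"
  shows "T j * (A * B) = (A * B) * T j"
proof (cases "j < i")
  case True
  then have "T j * A = A * T j" "T j * B = B * T j"
    unfolding A_def B_def using assms
    by (auto intro!: hecke_T_commute_prod_far[OF H])
  then show ?thesis by (rule mult_commute_through_product)
next
  case False
  then have "i < j" using assms by linarith
  define P where "P = prod_list (map T [i..<j-1])"
  define Q where "Q = prod_list (map T [j+1..<N])"
  define P' where "P' = prod_list (map T (rev [i..<j-1]))"
  define Q' where "Q' = prod_list (map T (rev [j+1..<N]))"
  have A: "A = P * T (j-1) * T j * Q" and B: "B = Q' * T j * T (j-1) * P'"
    unfolding A_def B_def P_def Q_def P'_def Q'_def upt_split_around[OF \<open>i < j\<close> \<open>j < N\<close>]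
    by (simp_all add: mult.assoc)
  have braid: "T (j-1) * T j * T (j-1) = T j * T (j-1) * T j"
    using hecke_braid[OF H, of "j-1"] \<open>i < j\<close> assms by simp
  have "T j * P = P * T j" "T (j-1) * Q = Q * T (j-1)"
    "T j * P' = P' * T j" "T (j-1) * Q' = Q' * T (j-1)"
    unfolding P_def Q_def P'_def Q'_def using \<open>i < j\<close> assms
    by (auto intro!: hecke_T_commute_prod_far[OF H])
  then have "T j * A = A * T (j-1)" "T (j-1) * B = B * T j"
    unfolding A B using braid_conjugates_word[OF braid] by simp_all
  then show ?thesis by (rule mult_commute_through_product)
qed

theorem lemma2p2:
  fixes N i j :: nat and emb :: "complex poly fract \<Rightarrow> 'h::ring_1" and T :: "nat \<Rightarrow> 'h"
  assumes "N \<ge> 2" and "is_hecke N emb T"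
    and "1 \<le> i" and "i \<le> N - 1" and "1 \<le> j" and "j \<le> N - 1"
    and "i \<noteq> j" and "i \<noteq> j + 1"
  shows "Tinv emb T j * phi N emb T i * T j = phi N emb T i"
proof -
  have H: "is_hecke N emb T" and "j < N" using assms by auto
  define c where "c = emb (s_ind powi (int i - int N))"
  define AB where "AB = prod_list (map T [i..<N]) * prod_list (map T (rev [i..<N]))"
  have phi: "phi N emb T i = c * AB" unfolding phi_def AB_def c_def by (simp add: mult.assoc)
  have "T j * AB = AB * T j"
    using hecke_T_commute_palindrome[OF H \<open>1 \<le> i\<close> \<open>1 \<le> j\<close> \<open>j < N\<close> assms(7,8)]
    unfolding AB_def .
  then have "phi N emb T i * T j = T j * phi N emb T i"
    unfolding phi c_def by (simp add: hecke_emb_central[OF H] mult.assoc flip: mult.assoc[of "T j"])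
  then have "Tinv emb T j * phi N emb T i * T j = (Tinv emb T j * T j) * phi N emb T i"
    by (simp add: mult.assoc)
  also have "\<dots> = phi N emb T i" using Tinv_mult_T[OF H \<open>1 \<le> j\<close> \<open>j < N\<close>] by simp
  finally show ?thesis .
qed

end
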